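(* Let $\mathsf{S}$ be a random sprinkle in $d$-dimensional Minkowski spacetime, i.e. the set of points of a Poisson point process with intensity $\rho\cdot\nu$ ($\rho>0$ a constant, $\nu$ the Lebesgue volume measure), equipped with the causal order restricted from Minkowski spacetime. Then, with probability $1$, $\mathsf{S}$ is total locally unsymmetric.
   Context: Minkowski spacetime $\mathbb{M}^d$ is $\mathbb{R}^{d}=\mathbb{R}^{1,d-1}$ with metric $\mathrm{diag}(1,-1,\dots,-1)$, partially ordered by $x\le y$ iff $y-x$ is zero or a future-directed causal vector. For the Poisson process, the number of points in a bounded region $U$ is Poisson distributed with mean $\rho\,\nu(U)$, independently for disjoint regions. Local (un)symmetry: $\ell(X)$ is the cardinality of a longest chain of a poset $X$. A subset $A$ of a poset $X$ is maximally ordered in $X$ if $|\{(a,b)\in A\times A:a<b\}|$ is maximal among subsets of $X$ of cardinality $|A|$. For $\sigma\in\mathrm{Aut}(P)$, $\Sigma(\sigma)=\{a:\sigma(a)\ne a\}$. For a finite poset $Q$ and $r\ge2$: $\sigma$ is a $(Q,r)$-generator if there exist subsets $S_0,\dots,S_{r-1}\subset\Sigma(\sigma)$, each isomorphic to $Q$, which are smallest maximally ordered subsets of $\Sigma(\sigma)$ with $\sigma(S_i)=S_{(i+1)\bmod r}$, $\ell(S_i)=\ell(\Sigma(\sigma))$, $\bigcup_iS_i=\Sigma(\sigma)$; distinct $S_i,S_j$ are $(Q,r)$-symmetric subsets. Elements $a,b$ are $(Q,r,0)$-symmetric if $a=b$; $(Q,r,1)$-symmetric if there are $(Q,r)$-symmetric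 subsets $A,B$ with generator $\sigma$, $a\in A$, $b=\sigma^q(a)\in B$, $1\le q<r$; for $m\ge2$, $(Q,r,m)$-symmetric if not $(Q,r,j)$-symmetric for $j<m$ but there exist $c$, $j<m$ with $a$ $(Q,r,j)$-symmetric to $c$ and $c$ $(Q,r,m-j)$-symmetric to $b$; $(Q,r)$-symmetric if $(Q,r,m)$-symmetric for some $m\ge0$ (an equivalence relation). $P\oslash_rQ$ is the quotient poset of equivalence classes with $E\le F$ iff some $e\in E$, $f\in F$ satisfy $e\le f$. $P$ is locally symmetric if $P\oslash_rQ\not\cong P$ for some finite $Q$ and $r\ge2$, locally unsymmetric otherwise. For $k\in\mathbb{N}_0$, a poset $P$ is $k$-stable locally unsymmetric if for every subset $S\subseteq P$ with $|S|\le k$ the poset $P\setminus S$ (with induced order) is locally unsymmetric. $P$ is total locally unsymmetric if it is $k$-stable locally unsymmetric for every finite $k<|P|$. *)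

theory Defs
  imports "HOL-Probability.Probability" "HOL-Library.Extended_Nat"
begin

definition po_on :: "'a set \<Rightarrow> ('a \<Rightarrow> 'a \<Rightarrow> bool) \<Rightarrow> bool" where
  "po_on X le \<longleftrightarrow> (\<forall>a\<in>X. le a a) \<and>
     (\<forall>a\<in>X. \<forall>b\<in>X. le a b \<and> le b a \<longrightarrow> a = b) \<and>
     (\<forall>a\<in>X. \<forall>b\<in>X. \<forall>c\<in>X. le a b \<and> le b c \<longrightarrow> le a c)"

definition strictly_below :: "('a \<Rightarrow> 'a \<Rightarrow> bool) \<Rightarrow> 'a \<Rightarrow> 'a \<Rightarrow> bool" where
  "strictly_below le a b \<longleftrightarrow> le a b \<and> a \<noteq> b"

definition is_chain :: "('a \<Rightarrow> 'a \<Rightarrow> bool) \<Rightarrow> 'a set \<Rightarrow> bool" where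
  "is_chain le C \<longleftrightarrow> (\<forall>a\<in>C. \<forall>b\<in>C. le a b \<or> le b a)"

definition height :: "'a set \<Rightarrow> ('a \<Rightarrow> 'a \<Rightarrow> bool) \<Rightarrow> enat" where
  "height X le = Sup {enat (card C) | C. C \<subseteq> X \<and> finite C \<and> is_chain le C}"

definition order_iso :: "'a set \<Rightarrow> ('a \<Rightarrow> 'a \<Rightarrow> bool) \<Rightarrow> 'b set \<Rightarrow> ('b \<Rightarrow> 'b \<Rightarrow> bool) \<Rightarrow> bool" where
  "order_iso X le Y le' \<longleftrightarrow> (\<exists>f. bij_betw f X Y \<and> (\<forall>a\<in>X. \<forall>b\<in>X. le a b \<longleftrightarrow> le' (f a) (f b)))"

definition automorphism :: "'a set \<Rightarrow> ('a \<Rightarrow> 'a \<Rightarrow> bool) \<Rightarrow> ('a \<Rightarrow> 'a) \<Rightarrow> bool" where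
  "automorphism X le \<sigma> \<longleftrightarrow> bij_betw \<sigma> X X \<and> (\<forall>a\<in>X. \<forall>b\<in>X. le a b \<longleftrightarrow> le (\<sigma> a) (\<sigma> b))"

definition moved :: "'a set \<Rightarrow> ('a \<Rightarrow> 'a) \<Rightarrow> 'a set" where
  "moved X \<sigma> = {a \<in> X. \<sigma> a \<noteq> a}"

definition ordered_pairs :: "('a \<Rightarrow> 'a \<Rightarrow> bool) \<Rightarrow> 'a set \<Rightarrow> ('a \<times> 'a) set" where
  "ordered_pairs le A = {(a, b) \<in> A \<times> A. strictly_below le a b}"

definition max_ordered :: "'a set \<Rightarrow> ('a \<Rightarrow> 'a \<Rightarrow> bool) \<Rightarrow> 'a set \<Rightarrow> bool" where
  "max_ordered X le A \<longleftrightarrow> A \<subseteq> X \<and> finite A \<and>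
     (\<forall>B. B \<subseteq> X \<and> finite B \<and> card B = card A \<longrightarrow>
          card (ordered_pairs le B) \<le> card (ordered_pairs le A))"

definition smallest_max_ordered :: "'a set \<Rightarrow> ('a \<Rightarrow> 'a \<Rightarrow> bool) \<Rightarrow> 'a set \<Rightarrow> bool" where
  "smallest_max_ordered X le A \<longleftrightarrow>
     max_ordered X le A \<and> height A le = height X le \<and>
     (\<forall>B. max_ordered X le B \<and> height B le = height X le \<longrightarrow> card A \<le> card B)"

text \<open>Finite posets Q are represented on subsets of nat (every finite poset is isomorphic
  to one of these). The family Sf 0, ..., Sf (r-1) witnesses that sigma is a (Q,r)-generator.\<close>
definition generator_family ::
  "'a set \<Rightarrow> ('a \<Rightarrow> 'a \<Rightarrow> bool) \<Rightarrow> nat set \<Rightarrow> (nat \<Rightarrow> nat \<Rightarrow> bool) \<Rightarrow> nat \<Rightarrow> ('a \<Rightarrow> 'a) \<Rightarrow> (nat \<Rightarrow> 'a set) \<Rightarrow> bool" where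
  "generator_family X le Qc Qle r \<sigma> Sf \<longleftrightarrow>
     automorphism X le \<sigma> \<and>
     (\<forall>i<r. Sf i \<subseteq> moved X \<sigma> \<and> order_iso (Sf i) le Qc Qle \<and>
            smallest_max_ordered (moved X \<sigma>) le (Sf i) \<and>
            \<sigma> ` (Sf i) = Sf ((i + 1) mod r) \<and>
            height (Sf i) le = height (moved X \<sigma>) le) \<and>
     (\<Union>i<r. Sf i) = moved X \<sigma>"

definition is_generator ::
  "'a set \<Rightarrow> ('a \<Rightarrow> 'a \<Rightarrow> bool) \<Rightarrow> nat set \<Rightarrow> (nat \<Rightarrow> nat \<Rightarrow> bool) \<Rightarrow> nat \<Rightarrow> ('a \<Rightarrow> 'a) \<Rightarrow> bool" where
  "is_generator X le Qc Qle r \<sigma> \<longleftrightarrow> (\<exists>Sf. generator_family X le Qc Qle r \<sigma> Sf)"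

definition symmetric_subsets ::
  "'a set \<Rightarrow> ('a \<Rightarrow> 'a \<Rightarrow> bool) \<Rightarrow> nat set \<Rightarrow> (nat \<Rightarrow> nat \<Rightarrow> bool) \<Rightarrow> nat \<Rightarrow> ('a \<Rightarrow> 'a) \<Rightarrow> 'a set \<Rightarrow> 'a set \<Rightarrow> bool" where
  "symmetric_subsets X le Qc Qle r \<sigma> A B \<longleftrightarrow>
     (\<exists>Sf. generator_family X le Qc Qle r \<sigma> Sf \<and>
        (\<exists>i<r. \<exists>j<r. A = Sf i \<and> B = Sf j \<and> A \<noteq> B))"

definition sym1 ::
  "'a set \<Rightarrow> ('a \<Rightarrow> 'a \<Rightarrow> bool) \<Rightarrow> nat set \<Rightarrow> (nat \<Rightarrow> nat \<Rightarrow> bool) \<Rightarrow> nat \<Rightarrow> 'a \<Rightarrow> 'a \<Rightarrow> bool" where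
  "sym1 X le Qc Qle r a b \<longleftrightarrow>
     (\<exists>\<sigma> A B q. symmetric_subsets X le Qc Qle r \<sigma> A B \<and> a \<in> A \<and>
        1 \<le> q \<and> q < r \<and> b = (\<sigma> ^^ q) a \<and> b \<in> B)"

function symm ::
  "'a set \<Rightarrow> ('a \<Rightarrow> 'a \<Rightarrow> bool) \<Rightarrow> nat set \<Rightarrow> (nat \<Rightarrow> nat \<Rightarrow> bool) \<Rightarrow> nat \<Rightarrow> nat \<Rightarrow> 'a \<Rightarrow> 'a \<Rightarrow> bool" where
  "symm X le Qc Qle r m a b =
     (if m = 0 then a = b
      else if m = 1 then sym1 X le Qc Qle r a b
      else (\<forall>j\<in>{..<m}. \<not> symm X le Qc Qle r j a b) \<and>
           (\<exists>j\<in>{1..<m}. \<exists>c. symm X le Qc Qle r j a c \<and> symm X le Qc Qle r (m - j) c b))"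
  by pat_completeness auto
termination
  by (relation "Wellfounded.measure (\<lambda>(X, le, Qc, Qle, r, m, a, b). m)") auto

definition qr_symmetric ::
  "'a set \<Rightarrow> ('a \<Rightarrow> 'a \<Rightarrow> bool) \<Rightarrow> nat set \<Rightarrow> (nat \<Rightarrow> nat \<Rightarrow> bool) \<Rightarrow> nat \<Rightarrow> 'a \<Rightarrow> 'a \<Rightarrow> bool" where
  "qr_symmetric X le Qc Qle r a b \<longleftrightarrow> (\<exists>m. symm X le Qc Qle r m a b)"

definition quot_carrier ::
  "'a set \<Rightarrow> ('a \<Rightarrow> 'a \<Rightarrow> bool) \<Rightarrow> nat set \<Rightarrow> (nat \<Rightarrow> nat \<Rightarrow> bool) \<Rightarrow> nat \<Rightarrow> 'a set set" where
  "quot_carrier X le Qc Qle r = (\<lambda>a. {b \<in> X. qr_symmetric X le Qc Qle r a b}) ` X"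

definition quot_le :: "('a \<Rightarrow> 'a \<Rightarrow> bool) \<Rightarrow> 'a set \<Rightarrow> 'a set \<Rightarrow> bool" where
  "quot_le le E F \<longleftrightarrow> (\<exists>e\<in>E. \<exists>f\<in>F. le e f)"

definition locally_symmetric :: "'a set \<Rightarrow> ('a \<Rightarrow> 'a \<Rightarrow> bool) \<Rightarrow> bool" where
  "locally_symmetric X le \<longleftrightarrow>
     (\<exists>Qc Qle r. finite Qc \<and> po_on Qc Qle \<and> r \<ge> 2 \<and>
        \<not> order_iso (quot_carrier X le Qc Qle r) (quot_le le) X le)"

definition locally_unsymmetric :: "'a set \<Rightarrow> ('a \<Rightarrow> 'a \<Rightarrow> bool) \<Rightarrow> bool" where
  "locally_unsymmetric X le \<longleftrightarrow> \<not> locally_symmetric X le"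

definition stable_locally_unsymmetric :: "nat \<Rightarrow> 'a set \<Rightarrow> ('a \<Rightarrow> 'a \<Rightarrow> bool) \<Rightarrow> bool" where
  "stable_locally_unsymmetric k X le \<longleftrightarrow>
     (\<forall>S. S \<subseteq> X \<and> finite S \<and> card S \<le> k \<longrightarrow> locally_unsymmetric (X - S) le)"

definition total_locally_unsymmetric :: "'a set \<Rightarrow> ('a \<Rightarrow> 'a \<Rightarrow> bool) \<Rightarrow> bool" where
  "total_locally_unsymmetric X le \<longleftrightarrow>
     (\<forall>k::nat. (infinite X \<or> k < card X) \<longrightarrow> stable_locally_unsymmetric k X le)"

text \<open>Points of d-dimensional Minkowski spacetime, d = 1 + DIM('b), are pairs (time, space).
  x \<le> y iff y - x is zero or future-directed causal.\<close>
definition causal_le :: "real \<times> 'b::euclidean_space \<Rightarrow> real \<times> 'b \<Rightarrow> bool" where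
  "causal_le x y \<longleftrightarrow> norm (snd y - snd x) \<le> fst y - fst x"

definition poisson_point_process ::
  "'w measure \<Rightarrow> real \<Rightarrow> ('w \<Rightarrow> (real \<times> 'b::euclidean_space) set) \<Rightarrow> bool" where
  "poisson_point_process M \<rho> S \<longleftrightarrow>
     prob_space M \<and>
     (\<forall>U \<in> sets lborel. bounded U \<longrightarrow>
        (AE \<omega> in M. finite (S \<omega> \<inter> U)) \<and>
        (\<forall>k::nat. {\<omega> \<in> space M. card (S \<omega> \<inter> U) = k} \<in> sets M \<and>
           measure M {\<omega> \<in> space M. card (S \<omega> \<inter> U) = k} =
             exp (- (\<rho> * measure lborel U)) * (\<rho> * measure lborel U) ^ k / fact k)) \<and>
     (\<forall>(I :: nat set) (U :: nat \<Rightarrow> (real \<times> 'b) set).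
        finite I \<longrightarrow> (\<forall>i\<in>I. U i \<in> sets lborel \<and> bounded (U i)) \<longrightarrow> disjoint_family_on U I \<longrightarrow>
        prob_space.indep_vars M (\<lambda>_. count_space UNIV) (\<lambda>i \<omega>. card (S \<omega> \<inter> U i)) I)"

end

theory Submission
  imports Defs
begin

text \<open>Call a poset infinitely distinguished if any two distinct elements a, b are told apart by
  infinitely many c, in the sense that c lies below exactly one of them. Such a poset is totally
  locally unsymmetric: a (Q,r)-generator moves only the finitely many points of r copies of Q, and
  a point fixed by an automorphism \<sigma> cannot tell a from \<sigma> a, so every generator is the identity,
  (Q,r)-symmetry is equality and P \<oslash>_r Q is P itself; deleting finitely many points
  preserves the property.

  A sprinkle is almost surely infinitely distinguished. Given a \<noteq> b, choose e = \<plusminus> a basis vector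
  with t - x\<cdot>e smaller at a than at b. A row of disjoint balls of fixed radius, starting just
  below b and receding into the past along the null direction (1, e), lies in the past of b but
  outside the past of a; having infinite volume, it almost surely contains infinitely many
  sprinkled points. Countably many such tubes suffice for all pairs a, b at once.\<close>

declare symm.simps[simp del]

definition infinitely_distinguished :: "'a set \<Rightarrow> ('a \<Rightarrow> 'a \<Rightarrow> bool) \<Rightarrow> bool" where
  "infinitely_distinguished X le \<longleftrightarrow>
     (\<forall>a\<in>X. \<forall>b\<in>X. a \<noteq> b \<longrightarrow> infinite {c\<in>X. le c a \<noteq> le c b})"

lemma infinitely_distinguished_Diff_finite:
  assumes "infinitely_distinguished X le" and "finite F"
  shows "infinitely_distinguished (X - F) le"
  unfolding infinitely_distinguished_def
proof clarify
  fix a b assume ab: "a \<in> X" "a \<notin> F" "b \<in> X" "b \<notin> F" "a \<noteq> b"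
    and fin: "finite {c\<in>X - F. le c a \<noteq> le c b}"
  have "{c\<in>X. le c a \<noteq> le c b} \<subseteq> {c\<in>X - F. le c a \<noteq> le c b} \<union> F" by auto
  with fin \<open>finite F\<close> have "finite {c\<in>X. le c a \<noteq> le c b}" by (meson finite_UnI finite_subset)
  with assms(1) ab show False unfolding infinitely_distinguished_def by blast
qed

lemma moved_eq_empty_if_finite:
  assumes aut: "automorphism X le \<sigma>" and fin: "finite (moved X \<sigma>)"
    and dist: "infinitely_distinguished X le"
  shows "moved X \<sigma> = {}"
proof (rule ccontr)
  assume "moved X \<sigma> \<noteq> {}"
  then obtain a where a: "a \<in> X" "\<sigma> a \<noteq> a" unfolding moved_def by auto
  have \<sigma>a: "\<sigma> a \<in> X" using aut a(1) unfolding automorphism_def by (blast dest: bij_betw_apply)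
  have "{c\<in>X. le c a \<noteq> le c (\<sigma> a)} \<subseteq> moved X \<sigma>"
  proof
    fix c assume c: "c \<in> {c\<in>X. le c a \<noteq> le c (\<sigma> a)}"
    then have "le (\<sigma> c) (\<sigma> a) \<noteq> le c (\<sigma> a)" using aut a(1) unfolding automorphism_def by auto
    then show "c \<in> moved X \<sigma>" using c unfolding moved_def by auto
  qed
  then have "finite {c\<in>X. le c a \<noteq> le c (\<sigma> a)}" using fin by (rule finite_subset)
  with dist a \<sigma>a show False unfolding infinitely_distinguished_def by metis
qed

lemma generator_family_finite_moved:
  assumes "generator_family X le Qc Qle r \<sigma> Sf" and "finite Qc"
  shows "finite (moved X \<sigma>)"
proof -
  have "finite (Sf i)" if "i < r" for i
  proof -
    from assms(1) that obtain f where "bij_betw f (Sf i) Qc"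
      unfolding generator_family_def order_iso_def by blast
    with assms(2) show ?thesis using bij_betw_finite by blast
  qed
  moreover have "moved X \<sigma> = (\<Union>i<r. Sf i)"
    using assms(1) unfolding generator_family_def by blast
  ultimately show ?thesis by simp
qed

lemma not_sym1_if_infinitely_distinguished:
  assumes "infinitely_distinguished X le" and "finite Qc"
  shows "\<not> sym1 X le Qc Qle r a b"
proof
  assume "sym1 X le Qc Qle r a b"
  then obtain \<sigma> Sf i where gf: "generator_family X le Qc Qle r \<sigma> Sf" and "i < r" "a \<in> Sf i"
    unfolding sym1_def symmetric_subsets_def by blast
  then have "a \<in> moved X \<sigma>" unfolding generator_family_def by blast
  moreover have "moved X \<sigma> = {}"
  proof (rule moved_eq_empty_if_finite)
    show "automorphism X le \<sigma>" using gf unfolding generator_family_def by blast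
    show "finite (moved X \<sigma>)" using gf assms(2) by (rule generator_family_finite_moved)
  qed (rule assms(1))
  ultimately show False by simp
qed

lemma symm_imp_eq:
  assumes "\<And>a b. sym1 X le Qc Qle r a b \<Longrightarrow> a = b"
  shows "symm X le Qc Qle r m a b \<Longrightarrow> a = b"
proof (induction m arbitrary: a b rule: less_induct)
  case (less m)
  consider "m = 0" | "m = 1" | "m \<ge> 2" by linarith
  then show ?case
  proof cases
    case 1
    then show ?thesis using less.prems by (simp add: symm.simps)
  next
    case 2
    then show ?thesis using less.prems assms by (simp add: symm.simps)
  next
    case 3
    then obtain j c where "j \<in> {1..<m}" "symm X le Qc Qle r j a c" "symm X le Qc Qle r (m - j) c b"
      using less.prems by (subst (asm) symm.simps) auto
    then show ?thesis using less.IH[of j a c] less.IH[of "m - j" c b] by auto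
  qed
qed

lemma qr_symmetric_iff_eq:
  assumes "\<And>a b. sym1 X le Qc Qle r a b \<Longrightarrow> a = b"
  shows "qr_symmetric X le Qc Qle r a b \<longleftrightarrow> a = b"
proof
  show "a = b" if "qr_symmetric X le Qc Qle r a b"
    using that symm_imp_eq[of X le Qc Qle r] assms unfolding qr_symmetric_def by blast
  show "qr_symmetric X le Qc Qle r a b" if "a = b"
    using that unfolding qr_symmetric_def by (intro exI[of _ 0]) (simp add: symm.simps)
qed

lemma quot_carrier_eq_singletons:
  assumes "\<And>a b. sym1 X le Qc Qle r a b \<Longrightarrow> a = b"
  shows "quot_carrier X le Qc Qle r = (\<lambda>a. {a}) ` X"
  using qr_symmetric_iff_eq[OF assms] unfolding quot_carrier_def by (auto intro!: image_cong)

lemma order_iso_singletons: "order_iso ((\<lambda>a. {a}) ` X) (quot_le le) X le"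
  unfolding order_iso_def
proof (intro exI conjI)
  show "bij_betw the_elem ((\<lambda>a. {a}) ` X) X"
    by (auto simp: bij_betw_def inj_on_def image_image)
  show "\<forall>E\<in>(\<lambda>a. {a}) ` X. \<forall>F\<in>(\<lambda>a. {a}) ` X. quot_le le E F \<longleftrightarrow> le (the_elem E) (the_elem F)"
    by (auto simp: quot_le_def)
qed

lemma locally_unsymmetric_if_infinitely_distinguished:
  assumes "infinitely_distinguished X le"
  shows "locally_unsymmetric X le"
  unfolding locally_unsymmetric_def locally_symmetric_def
proof clarify
  fix Qc :: "nat set" and Qle r
  assume "finite Qc" and not_iso: "\<not> order_iso (quot_carrier X le Qc Qle r) (quot_le le) X le"
  have "quot_carrier X le Qc Qle r = (\<lambda>a. {a}) ` X"
    using not_sym1_if_infinitely_distinguished[OF assms \<open>finite Qc\<close>]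
    by (intro quot_carrier_eq_singletons) blast
  with not_iso order_iso_singletons show False by metis
qed

lemma total_locally_unsymmetric_if_infinitely_distinguished:
  assumes "infinitely_distinguished X le"
  shows "total_locally_unsymmetric X le"
  unfolding total_locally_unsymmetric_def stable_locally_unsymmetric_def
  using assms
  by (auto intro: locally_unsymmetric_if_infinitely_distinguished infinitely_distinguished_Diff_finite)

definition lightcone_coord :: "'b::euclidean_space \<Rightarrow> real \<times> 'b \<Rightarrow> real" where
  "lightcone_coord e x = fst x - snd x \<bullet> e"

lemma lightcone_coord_mono:
  fixes e :: "'b::euclidean_space"
  assumes "norm e = 1" and "causal_le x y"
  shows "lightcone_coord e x \<le> lightcone_coord e y"
proof -
  have "(snd y - snd x) \<bullet> e \<le> norm (snd y - snd x)"
    using norm_cauchy_schwarz[of "snd y - snd x" e] assms(1) by simp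
  with assms(2) show ?thesis
    unfolding causal_le_def lightcone_coord_def by (simp add: inner_diff_left)
qed

lemma lightcone_coord_separates:
  fixes x y :: "real \<times> 'b::euclidean_space"
  assumes "x \<noteq> y"
  shows "\<exists>e \<in> Basis \<union> uminus ` Basis. lightcone_coord e x \<noteq> lightcone_coord e y"
proof (cases "snd x = snd y")
  case True
  then have "fst x \<noteq> fst y" using assms by (simp add: prod_eq_iff)
  moreover obtain i :: 'b where "i \<in> Basis" using nonempty_Basis by blast
  ultimately show ?thesis using True by (intro bexI[of _ i]) (auto simp: lightcone_coord_def)
next
  case False
  then obtain i :: 'b where i: "i \<in> Basis" "(snd x - snd y) \<bullet> i \<noteq> 0"
    by (metis euclidean_all_zero_iff right_minus_eq)
  show ?thesis
  proof (rule ccontr)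
    assume "\<not> ?thesis"
    then have "lightcone_coord i x = lightcone_coord i y" "lightcone_coord (-i) x = lightcone_coord (-i) y"
      using i(1) by auto
    then show False using i(2) unfolding lightcone_coord_def by (simp add: inner_diff_left)
  qed
qed

definition tube_ball :: "real \<times> 'b::euclidean_space \<Rightarrow> real \<Rightarrow> 'b \<Rightarrow> nat \<Rightarrow> (real \<times> 'b) set" where
  "tube_ball z r e k = ball (z - (2 * r * real k) *\<^sub>R (1, e)) r"

definition tube :: "real \<times> 'b::euclidean_space \<Rightarrow> real \<Rightarrow> 'b \<Rightarrow> (real \<times> 'b) set" where
  "tube z r e = (\<Union>k. tube_ball z r e k)"

lemma tube_subset_past_diff_past:
  fixes e :: "'b::euclidean_space"
  assumes e: "norm e = 1" and r: "4 * r \<le> \<delta>"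
    and ab: "lightcone_coord e a + 2 * \<delta> \<le> lightcone_coord e b"
    and z: "dist z (b - (\<delta>, 0)) < r" and y: "y \<in> tube z r e"
  shows "causal_le y b \<and> \<not> causal_le y a"
proof -
  obtain k where k: "y \<in> tube_ball z r e k" using y unfolding tube_def by blast
  define t where "t = 2 * r * real k"
  txt \<open>The shift -(\<delta> + t, t e) is past-directed timelike with slack \<delta> and lowers the null
    coordinate by exactly \<delta>; the error h is smaller than 2 r \<le> \<delta> / 2.\<close>
  define h where "h = y - (b - (\<delta> + t, t *\<^sub>R e))"
  have "r > 0" using k le_less_trans[OF zero_le_dist] unfolding tube_ball_def mem_ball by blast
  then have "t \<ge> 0" unfolding t_def by simp
  have "h = (y - (z - t *\<^sub>R (1, e))) + (z - (b - (\<delta>, 0)))" unfolding h_def by (simp add: algebra_simps)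
  then have "norm h \<le> norm (y - (z - t *\<^sub>R (1, e))) + norm (z - (b - (\<delta>, 0)))"
    by (metis norm_triangle_ineq)
  moreover have "norm (y - (z - t *\<^sub>R (1, e))) < r"
    using k unfolding tube_ball_def t_def by (simp add: dist_norm norm_minus_commute)
  ultimately have h: "norm h < 2 * r" using z by (simp add: dist_norm)
  have fst_h: "\<bar>fst h\<bar> \<le> norm h" and snd_h: "norm (snd h) \<le> norm h"
    using norm_fst_le[of "fst h" "snd h"] norm_snd_le[of "snd h" "fst h"] by simp_all
  have snd_h_e: "\<bar>snd h \<bullet> e\<bar> \<le> norm (snd h)" using Cauchy_Schwarz_ineq2[of "snd h" e] e by simp
  have fst_y: "fst y = fst b - \<delta> - t + fst h" and snd_y: "snd y = snd b - t *\<^sub>R e + snd h"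
    unfolding h_def by simp_all
  have "norm (snd b - snd y) = norm (t *\<^sub>R e - snd h)" unfolding snd_y by (simp add: algebra_simps)
  also have "\<dots> \<le> t + norm (snd h)" using norm_triangle_ineq4[of "t *\<^sub>R e" "snd h"] \<open>t \<ge> 0\<close> e by simp
  finally have "causal_le y b"
    unfolding causal_le_def using fst_y fst_h snd_h h r by linarith
  have "e \<bullet> e = 1" using e power2_norm_eq_inner[of e] by simp
  then have "lightcone_coord e y = lightcone_coord e b - \<delta> + fst h - snd h \<bullet> e"
    unfolding lightcone_coord_def fst_y snd_y by (simp add: inner_diff_left inner_add_left)
  then have "lightcone_coord e a < lightcone_coord e y"
    using ab fst_h snd_h snd_h_e h r by linarith
  then have "\<not> causal_le y a" using lightcone_coord_mono[OF e, of y a] by linarith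
  with \<open>causal_le y b\<close> show ?thesis by blast
qed

lemma disjoint_family_tube_ball:
  fixes e :: "'b::euclidean_space"
  shows "disjoint_family (tube_ball z r e)"
  unfolding disjoint_family_on_def
proof (intro ballI impI)
  fix j k :: nat assume "j \<noteq> k"
  define c where "c i = z - (2 * r * real i) *\<^sub>R (1::real, e)" for i
  show "tube_ball z r e j \<inter> tube_ball z r e k = {}"
  proof (rule ccontr)
    assume "tube_ball z r e j \<inter> tube_ball z r e k \<noteq> {}"
    then obtain x where x: "dist (c j) x < r" "dist (c k) x < r"
      unfolding tube_ball_def c_def by auto
    then have "r > 0" using le_less_trans[OF zero_le_dist] by blast
    have "1 \<le> \<bar>real k - real j\<bar>" using \<open>j \<noteq> k\<close> by linarith
    moreover have "1 \<le> norm (1::real, e)" using norm_fst_le[of "1::real" e] by simp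
    ultimately have "1 * 1 \<le> \<bar>real k - real j\<bar> * norm (1::real, e)" by (rule mult_mono) auto
    then have "2 * r \<le> 2 * r * (\<bar>real k - real j\<bar> * norm (1::real, e))"
      using \<open>r > 0\<close> by simp
    also have "\<dots> = norm ((2 * r * (real k - real j)) *\<^sub>R (1::real, e))"
      using \<open>r > 0\<close> by (simp add: abs_mult del: scaleR_Pair)
    also have "\<dots> = dist (c j) (c k)" unfolding c_def by (simp add: dist_norm algebra_simps)
    also have "\<dots> < 2 * r" using x dist_triangle[of "c j" "c k" x] dist_commute[of x "c k"] by linarith
    finally show False by simp
  qed
qed

lemma poisson_cdf_tendsto_0:
  "((\<lambda>x::real. \<Sum>k\<le>N. exp (- x) * x ^ k / fact k) \<longlongrightarrow> 0) at_top"
proof -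
  have "((\<lambda>x::real. exp (- x) * x ^ k / fact k) \<longlongrightarrow> 0) at_top" for k :: nat
  proof -
    have "(\<lambda>x::real. x ^ k / exp x / fact k) = (\<lambda>x. exp (- x) * x ^ k / fact k)"
      by (simp add: exp_minus field_simps)
    then show ?thesis
      using tendsto_divide_zero[OF tendsto_power_div_exp_0, of k "fact k"] by (simp only:)
  qed
  then show ?thesis by (intro tendsto_null_sum)
qed

lemma AE_poisson_infinite_if_volume_unbounded:
  fixes S :: "'w \<Rightarrow> (real \<times> 'b::euclidean_space) set"
  assumes "\<rho> > 0" and pp: "poisson_point_process M \<rho> S"
    and U: "\<And>n. U n \<in> sets lborel" "\<And>n. bounded (U n)" "\<And>n. U n \<subseteq> T"
    and lim: "filterlim (\<lambda>n. measure lborel (U n)) at_top sequentially"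
  shows "AE \<omega> in M. infinite (S \<omega> \<inter> T)"
proof -
  interpret prob_space M using pp unfolding poisson_point_process_def by blast
  define count_eq where "count_eq n k = {\<omega> \<in> space M. card (S \<omega> \<inter> U n) = k}" for n k
  have law: "count_eq n k \<in> sets M \<and>
      measure M (count_eq n k) = exp (- (\<rho> * measure lborel (U n))) * (\<rho> * measure lborel (U n)) ^ k / fact k"
    for n k using pp U(1,2) unfolding poisson_point_process_def count_eq_def by blast
  define count_bounded where "count_bounded N = {\<omega> \<in> space M. \<forall>n. card (S \<omega> \<inter> U n) \<le> N}" for N
  have count_bounded_eq: "count_bounded N = (\<Inter>n. \<Union>k\<le>N. count_eq n k)" for N
    unfolding count_bounded_def count_eq_def by auto
  have meas: "count_bounded N \<in> sets M" for N
    unfolding count_bounded_eq using law by (intro sets.countable_INT sets.finite_UN) auto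
  have "measure M (count_bounded N) \<le> (\<Sum>k\<le>N. exp (- x) * x ^ k / fact k)"
    if "x = \<rho> * measure lborel (U n)" for n N x
  proof -
    have "measure M (count_bounded N) \<le> measure M (\<Union>k\<le>N. count_eq n k)"
      unfolding count_bounded_eq using law by (intro finite_measure_mono) auto
    also have "\<dots> = (\<Sum>k\<le>N. measure M (count_eq n k))"
      using law by (intro finite_measure_finite_Union) (auto simp: disjoint_family_on_def count_eq_def)
    finally show ?thesis using law that by simp
  qed
  moreover have "filterlim (\<lambda>n. \<rho> * measure lborel (U n)) at_top sequentially"
    using \<open>\<rho> > 0\<close> lim by (rule filterlim_tendsto_pos_mult_at_top[OF tendsto_const])
  ultimately have "measure M (count_bounded N) \<le> 0" for N
    by (intro LIMSEQ_le_const[OF filterlim_compose[OF poisson_cdf_tendsto_0]]) blast+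
  then have "measure M (count_bounded N) = 0" for N by (simp add: measure_le_0_iff)
  then have "AE \<omega> in M. \<omega> \<notin> count_bounded N" for N
    using meas by (intro AE_I[of _ _ "count_bounded N"]) (auto simp: emeasure_eq_measure)
  then have "AE \<omega> in M. \<forall>N. \<omega> \<notin> count_bounded N" by (simp add: AE_all_countable)
  then show ?thesis
  proof (rule AE_mp[OF _ AE_I2], intro impI notI)
    fix \<omega> assume "\<omega> \<in> space M" and "\<forall>N. \<omega> \<notin> count_bounded N" and fin: "finite (S \<omega> \<inter> T)"
    have "card (S \<omega> \<inter> U n) \<le> card (S \<omega> \<inter> T)" for n
      using U(3) fin by (intro card_mono) blast+
    then have "\<omega> \<in> count_bounded (card (S \<omega> \<inter> T))"
      unfolding count_bounded_def using \<open>\<omega> \<in> space M\<close> by blast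
    with \<open>\<forall>N. \<omega> \<notin> count_bounded N\<close> show False by blast
  qed
qed

lemma AE_poisson_infinite_tube:
  fixes S :: "'w \<Rightarrow> (real \<times> 'b::euclidean_space) set"
  assumes "\<rho> > 0" and "poisson_point_process M \<rho> S" and "r > 0"
  shows "AE \<omega> in M. infinite (S \<omega> \<inter> tube z r e)"
proof (rule AE_poisson_infinite_if_volume_unbounded[OF assms(1,2)])
  define v where "v = measure lborel (ball (0 :: real \<times> 'b) r)"
  have "v > 0" unfolding v_def using content_ball_pos[OF \<open>r > 0\<close>] .
  have "measure lborel (tube_ball z r e k) = v" for k
    unfolding tube_ball_def v_def
    using content_ball_conv_unit_ball[where 'a = "real \<times> 'b", of r] \<open>r > 0\<close> by simp
  moreover have "measure lborel (\<Union>k<n. tube_ball z r e k) = (\<Sum>k<n. measure lborel (tube_ball z r e k))" for n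
  proof (rule measure_finite_Union)
    show "disjoint_family_on (tube_ball z r e) {..<n}"
      using disjoint_family_tube_ball by (rule disjoint_family_on_mono[rotated]) simp
    show "emeasure lborel (tube_ball z r e k) \<noteq> \<infinity>" for k
      using emeasure_lborel_ball_finite unfolding tube_ball_def by (simp add: less_top)
  qed (auto simp: tube_ball_def)
  ultimately have "measure lborel (\<Union>k<n. tube_ball z r e k) = real n * v" for n by simp
  then show "filterlim (\<lambda>n. measure lborel (\<Union>k<n. tube_ball z r e k)) at_top sequentially"
    using filterlim_at_top_mult_tendsto_pos[OF tendsto_const \<open>v > 0\<close> filterlim_real_sequentially]
    by simp
  show "(\<Union>k<n. tube_ball z r e k) \<in> sets lborel" for n
    unfolding tube_ball_def by (intro sets.finite_UN) auto
  show "bounded (\<Union>k<n. tube_ball z r e k)" for n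
    unfolding tube_ball_def by (intro bounded_UN) auto
  show "(\<Union>k<n. tube_ball z r e k) \<subseteq> tube z r e" for n
    unfolding tube_def by blast
qed

lemma infinite_past_diff_past_if_tubes_infinite:
  fixes X :: "(real \<times> 'b::euclidean_space) set"
  assumes dense: "\<And>U. open U \<Longrightarrow> U \<noteq> {} \<Longrightarrow> \<exists>z\<in>D. z \<in> U"
    and tubes: "\<And>z n e. z \<in> D \<Longrightarrow> e \<in> Basis \<union> uminus ` Basis \<Longrightarrow>
      infinite (X \<inter> tube z (1 / real (Suc n)) e)"
    and e: "e \<in> Basis \<union> uminus ` Basis" and lt: "lightcone_coord e a < lightcone_coord e b"
  shows "infinite {c\<in>X. causal_le c b \<and> \<not> causal_le c a}"
proof -
  define \<delta> where "\<delta> = (lightcone_coord e b - lightcone_coord e a) / 2"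
  have "\<delta> > 0" using lt unfolding \<delta>_def by simp
  then obtain n :: nat where n: "inverse (real (Suc n)) < \<delta> / 4"
    using reals_Archimedean[of "\<delta> / 4"] by auto
  define r where "r = 1 / real (Suc n)"
  have "r > 0" and "4 * r \<le> \<delta>" using n unfolding r_def by (simp_all add: field_simps)
  obtain z where "z \<in> D" and z: "z \<in> ball (b - (\<delta>, 0)) r"
    using dense[of "ball (b - (\<delta>, 0)) r"] \<open>r > 0\<close> by auto
  have "norm e = 1" using e by auto
  moreover have "lightcone_coord e a + 2 * \<delta> \<le> lightcone_coord e b" unfolding \<delta>_def by (simp add: field_simps)
  moreover have "dist z (b - (\<delta>, 0)) < r" using z by (simp add: dist_commute)
  ultimately have "X \<inter> tube z r e \<subseteq> {c\<in>X. causal_le c b \<and> \<not> causal_le c a}"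
    using tube_subset_past_diff_past[of e r \<delta> a b z] \<open>4 * r \<le> \<delta>\<close> by blast
  moreover have "infinite (X \<inter> tube z r e)" using tubes \<open>z \<in> D\<close> e unfolding r_def by blast
  ultimately show ?thesis using finite_subset by blast
qed

lemma infinitely_distinguished_if_tubes_infinite:
  fixes X :: "(real \<times> 'b::euclidean_space) set"
  assumes dense: "\<And>U. open U \<Longrightarrow> U \<noteq> {} \<Longrightarrow> \<exists>z\<in>D. z \<in> U"
    and tubes: "\<And>z n e. z \<in> D \<Longrightarrow> e \<in> Basis \<union> uminus ` Basis \<Longrightarrow>
      infinite (X \<inter> tube z (1 / real (Suc n)) e)"
  shows "infinitely_distinguished X causal_le"
  unfolding infinitely_distinguished_def
proof (intro ballI impI)
  fix a b :: "real \<times> 'b" assume "a \<noteq> b"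
  then obtain e where e: "e \<in> Basis \<union> uminus ` Basis"
    and ne: "lightcone_coord e a \<noteq> lightcone_coord e b"
    using lightcone_coord_separates by blast
  have "infinite {c\<in>X. causal_le c y \<and> \<not> causal_le c x}"
    if "lightcone_coord e x < lightcone_coord e y" for x y :: "real \<times> 'b"
    using infinite_past_diff_past_if_tubes_infinite[OF dense tubes e that] by blast
  with ne have "infinite {c\<in>X. causal_le c b \<and> \<not> causal_le c a} \<or>
      infinite {c\<in>X. causal_le c a \<and> \<not> causal_le c b}"
    by (meson linorder_neqE_linordered_idom)
  moreover have "{c\<in>X. causal_le c b \<and> \<not> causal_le c a} \<subseteq> {c\<in>X. causal_le c a \<noteq> causal_le c b}"
    and "{c\<in>X. causal_le c a \<and> \<not> causal_le c b} \<subseteq> {c\<in>X. causal_le c a \<noteq> causal_le c b}"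
    by auto
  ultimately show "infinite {c\<in>X. causal_le c a \<noteq> causal_le c b}" by (meson infinite_super)
qed

theorem mainTheorem15:
  fixes M :: "'w measure" and \<rho> :: real and S :: "'w \<Rightarrow> (real \<times> 'b::euclidean_space) set"
  assumes "\<rho> > 0"
    and "poisson_point_process M \<rho> S"
  shows "AE \<omega> in M. total_locally_unsymmetric (S \<omega>) causal_le"
proof -
  obtain D :: "(real \<times> 'b) set"
    where "countable D" and dense: "\<And>U. open U \<Longrightarrow> U \<noteq> {} \<Longrightarrow> \<exists>z\<in>D. z \<in> U"
    by (rule countable_dense_setE) blast
  have "countable (Basis \<union> uminus ` (Basis :: 'b set))" by (simp add: countable_finite)
  with \<open>countable D\<close> have "AE \<omega> in M. \<forall>z\<in>D. \<forall>n. \<forall>e\<in>Basis \<union> uminus ` Basis.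
      infinite (S \<omega> \<inter> tube z (1 / real (Suc n)) e)"
    by (simp add: AE_ball_countable AE_all_countable AE_poisson_infinite_tube[OF assms])
  then show ?thesis
    by (rule eventually_mono)
      (blast intro: total_locally_unsymmetric_if_infinitely_distinguished
        infinitely_distinguished_if_tubes_infinite[OF dense])
qed

end
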